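(* For every $n\geq1$ and all $i,j\in I$ with $|i|<|j|$ we have $C^{(n)}_{ij}\cdot v=0$.
   Context: Let $N\geq1$, $I=\{-N,\dots,-1,1,\dots,N\}$, and for $k\in I$ put $\bar k=0$ if $k>0$, $\bar k=1$ if $k<0$. The Lie superalgebra $\mathfrak{q}(N)$ over $\mathbb{C}$ is spanned by elements $F_{ij}$ ($i,j\in I$) with $F_{-i,-j}=F_{ij}$ (realized as $F_{ij}=E_{ij}+E_{-i,-j}\in\mathfrak{gl}(N|N)$), $F_{ij}$ of parity $\bar\imath+\bar\jmath\bmod 2$, and supercommutator $$[F_{ij}, F_{kl}] = \delta_{kj} F_{il} - (-1)^{(\bar{\imath}+ \bar{\jmath})(\bar{k} + \bar{l})} \delta_{il} F_{kj} + \delta_{k,-j} F_{-i,l} - (-1)^{(\bar{\imath} + \bar{\jmath})(\bar{k} + \bar{l})} \delta_{-i,l} F_{k,-j}.$$ For $n\geq1$ define $C^{(n)}_{ij}\in U(\mathfrak{q}(N))$ by $$C^{(n)}_{ij} = \sum_{k_1,\ldots,k_{n-1}\in I}F_{ik_1} (-1)^{\bar{k}_1} F_{k_1k_2} (-1)^{\bar{k}_2} \cdots F_{k_{n-2}k_{n-1}} (-1)^{\bar{k}_{n-1}} F_{k_{n-1}j}$$ (so $C^{(1)}_{ij}=F_{ij}$). Let $V$ be a representation of $\mathfrak{q}(N)$ and $v\in V$ a vector such that $F_{ij}\cdot v=0$ whenever $|i|<|j|$, and $F_{ii}\cdot v=\lambda_i v$ for $i=1,\dots,N$, where $\lambda_1,\dots,\lambda_N\in\mathbb{C}$.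 *)

theory Defs
  imports Complex_Main
begin

definition idx :: "nat \<Rightarrow> int set" where
  "idx N = {- int N .. int N} - {0}"

definition par :: "int \<Rightarrow> nat" where
  "par k = (if k > 0 then 0 else 1)"

definition sgn4 :: "int \<Rightarrow> int \<Rightarrow> int \<Rightarrow> int \<Rightarrow> complex" where
  "sgn4 i j k l = (-1) ^ ((par i + par j) * (par k + par l))"

text \<open>A representation of q(N) on a complex vector space V (scalar multiplication smul):
  rho i j is the (linear) operator by which F_ij acts, F_{-i,-j} = F_ij, and the operators
  satisfy the defining supercommutator relations of q(N), i.e. V is a U(q(N))-module.\<close>
definition q_rep ::
  "(complex \<Rightarrow> 'v::ab_group_add \<Rightarrow> 'v) \<Rightarrow> nat \<Rightarrow> (int \<Rightarrow> int \<Rightarrow> 'v \<Rightarrow> 'v) \<Rightarrow> bool" where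
  "q_rep smul N rho \<longleftrightarrow>
     vector_space smul \<and>
     (\<forall>i\<in>idx N. \<forall>j\<in>idx N. Vector_Spaces.linear smul smul (rho i j)) \<and>
     (\<forall>i\<in>idx N. \<forall>j\<in>idx N. rho (-i) (-j) = rho i j) \<and>
     (\<forall>i\<in>idx N. \<forall>j\<in>idx N. \<forall>k\<in>idx N. \<forall>l\<in>idx N. \<forall>w.
        rho i j (rho k l w) - smul (sgn4 i j k l) (rho k l (rho i j w)) =
          (if k = j then rho i l w else 0)
          - smul (sgn4 i j k l) (if i = l then rho k j w else 0)
          + (if k = - j then rho (- i) l w else 0)
          - smul (sgn4 i j k l) (if - i = l then rho k (- j) w else 0))"

text \<open>Cop smul N rho n i j is the operator C^(n)_ij for n \<ge> 1,
  via C^(1)_ij = F_ij and C^(n+1)_ij = \<Sum>_k F_ik (-1)^(bar k) C^(n)_kj.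
  (The value at n = 0 is an unused dummy.)\<close>
fun Cop ::
  "(complex \<Rightarrow> 'v::ab_group_add \<Rightarrow> 'v) \<Rightarrow> nat \<Rightarrow> (int \<Rightarrow> int \<Rightarrow> 'v \<Rightarrow> 'v) \<Rightarrow> nat
     \<Rightarrow> int \<Rightarrow> int \<Rightarrow> 'v \<Rightarrow> 'v" where
  "Cop smul N rho 0 i j = (\<lambda>w. 0)"
| "Cop smul N rho (Suc 0) i j = rho i j"
| "Cop smul N rho (Suc (Suc n)) i j =
     (\<lambda>w. \<Sum>k\<in>idx N. rho i k (smul ((-1) ^ par k) (Cop smul N rho (Suc n) k j w)))"

end

theory Submission
  imports Defs
begin

text \<open>By induction on n, the operators C(n)_cd obey the same supercommutation relations
  with the generators F_ab as the F_cd themselves: expand C(n+1)_cd = \<Sum>_k F_ck (-1)^k C(n)_kd,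
  apply the super Leibniz rule, and observe that the boundary terms of the two collapsed sums
  cancel.  Then C(n+1)_ij v = 0 for |i| < |j| by a second induction: a summand with |k| < |j|
  vanishes by hypothesis, and for |k| \<ge> |j| > |i| the relation rewrites F_ik C(n)_kj v as
  \<plusminus>C(n)_kj F_ik v + C(n)_ij v, where both terms vanish.\<close>

lemma idx_uminus: "x \<in> idx N \<Longrightarrow> - x \<in> idx N"
  by (auto simp: idx_def)

lemma idx_nonzero: "x \<in> idx N \<Longrightarrow> x \<noteq> 0"
  by (auto simp: idx_def)

lemma finite_idx: "finite (idx N)"
  by (auto simp: idx_def)

lemma sgn4_mult: "sgn4 a b c k * sgn4 a b k d = sgn4 a b c d"
proof -
  have "(par a + par b) * (par c + par k) + (par a + par b) * (par k + par d)
      = (par a + par b) * (par c + par d) + 2 * ((par a + par b) * par k)"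
    by (simp add: algebra_simps)
  then have "sgn4 a b c k * sgn4 a b k d =
     (-1::complex) ^ ((par a + par b) * (par c + par d)) * ((-1)^2) ^ ((par a + par b) * par k)"
    unfolding sgn4_def power_add[symmetric] power_mult[symmetric] by simp
  then show ?thesis by (simp add: sgn4_def)
qed

lemma sgn4_mult_sign_right: "sgn4 a b c b * (-1)^par b = sgn4 a b c a * (-1)^par a"
  unfolding sgn4_def par_def by auto

lemma sgn4_mult_sign_right_uminus: "a \<noteq> 0 \<Longrightarrow> b \<noteq> 0 \<Longrightarrow>
   sgn4 a b c (-b) * (-1)^par (-b) = sgn4 a b c (-a) * (-1)^par (-a)"
  unfolding sgn4_def par_def by auto

locale q_representation =
  fixes smul :: "complex \<Rightarrow> 'v::ab_group_add \<Rightarrow> 'v" and N :: nat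
    and rho :: "int \<Rightarrow> int \<Rightarrow> 'v \<Rightarrow> 'v"
  assumes q_rep: "q_rep smul N rho"
begin

sublocale vs: vector_space smul
  using q_rep by (simp add: q_rep_def)

lemma smul_if_zero: "smul x (if P then y else 0) = (if P then smul x y else 0)"
  by simp

abbreviation C where "C n \<equiv> Cop smul N rho n"

definition bracket_rhs :: "(int \<Rightarrow> int \<Rightarrow> 'v \<Rightarrow> 'v) \<Rightarrow> int \<Rightarrow> int \<Rightarrow> int \<Rightarrow> int \<Rightarrow> 'v \<Rightarrow> 'v" where
  "bracket_rhs X i j k l w =
     (if k = j then X i l w else 0)
     - smul (sgn4 i j k l) (if i = l then X k j w else 0)
     + (if k = - j then X (- i) l w else 0)
     - smul (sgn4 i j k l) (if - i = l then X k (- j) w else 0)"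

lemma rho_supercommutator:
  assumes "a \<in> idx N" "b \<in> idx N" "c \<in> idx N" "d \<in> idx N"
  shows "rho a b (rho c d w) = smul (sgn4 a b c d) (rho c d (rho a b w)) + bracket_rhs rho a b c d w"
proof -
  have "rho a b (rho c d w) - smul (sgn4 a b c d) (rho c d (rho a b w)) = bracket_rhs rho a b c d w"
    using q_rep assms unfolding q_rep_def bracket_rhs_def by blast
  then show ?thesis by (simp add: diff_eq_eq add.commute)
qed

lemma rho_linear: "i \<in> idx N \<Longrightarrow> j \<in> idx N \<Longrightarrow> Vector_Spaces.linear smul smul (rho i j)"
  using q_rep by (simp add: q_rep_def)

lemma rho_add: "i \<in> idx N \<Longrightarrow> j \<in> idx N \<Longrightarrow> rho i j (x + y) = rho i j x + rho i j y"
  using rho_linear by (rule module_hom.add[OF Vector_Spaces.linear.axioms(3)])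

lemma rho_scale: "i \<in> idx N \<Longrightarrow> j \<in> idx N \<Longrightarrow> rho i j (smul c x) = smul c (rho i j x)"
  using rho_linear by (rule module_hom.scale[OF Vector_Spaces.linear.axioms(3)])

lemma rho_additive: "i \<in> idx N \<Longrightarrow> j \<in> idx N \<Longrightarrow> additive (rho i j)"
  by unfold_locales (rule rho_add)

lemma rho_zero: "i \<in> idx N \<Longrightarrow> j \<in> idx N \<Longrightarrow> rho i j 0 = 0"
  using additive.zero[OF rho_additive] .

lemma rho_diff: "i \<in> idx N \<Longrightarrow> j \<in> idx N \<Longrightarrow> rho i j (x - y) = rho i j x - rho i j y"
  using additive.diff[OF rho_additive] .

lemma rho_sum: "i \<in> idx N \<Longrightarrow> j \<in> idx N \<Longrightarrow> rho i j (sum g A) = (\<Sum>x\<in>A. rho i j (g x))"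
  using additive.sum[OF rho_additive] .

lemma Cop_add:
  "k \<in> idx N \<Longrightarrow> j \<in> idx N \<Longrightarrow> C (Suc n) k j (x + y) = C (Suc n) k j x + C (Suc n) k j y"
proof (induction n arbitrary: k j)
  case 0
  then show ?case by (simp add: rho_add)
next
  case (Suc n)
  then show ?case by (simp add: rho_add vs.scale_right_distrib sum.distrib)
qed

lemma Cop_zero: "k \<in> idx N \<Longrightarrow> j \<in> idx N \<Longrightarrow> C (Suc n) k j 0 = 0"
  by (metis Cop_add add_cancel_right_right)

lemma sum_bracket_rhs_rho:
  assumes "a \<in> idx N" "b \<in> idx N" "c \<in> idx N"
  shows "(\<Sum>k\<in>idx N. bracket_rhs rho a b c k (smul ((-1)^par k) (C (Suc n) k d w))) =
     (if c = b then C (Suc (Suc n)) a d w else 0)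
     - smul (sgn4 a b c a) (rho c b (smul ((-1)^par a) (C (Suc n) a d w)))
     + (if c = - b then C (Suc (Suc n)) (- a) d w else 0)
     - smul (sgn4 a b c (-a)) (rho c (- b) (smul ((-1)^par (-a)) (C (Suc n) (-a) d w)))"
  using assms idx_uminus[OF assms(1)] finite_idx unfolding bracket_rhs_def
  by (simp add: sum.distrib sum_subtractf smul_if_zero)

lemma sum_rho_bracket_rhs_Cop:
  assumes "a \<in> idx N" "b \<in> idx N" "c \<in> idx N" "d \<in> idx N"
  shows "(\<Sum>k\<in>idx N. smul (sgn4 a b c k)
            (rho c k (smul ((-1)^par k) (bracket_rhs (C (Suc n)) a b k d w)))) =
     smul (sgn4 a b c a) (rho c b (smul ((-1)^par a) (C (Suc n) a d w)))
     - smul (sgn4 a b c d) (if a = d then C (Suc (Suc n)) c b w else 0)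
     + smul (sgn4 a b c (-a)) (rho c (-b) (smul ((-1)^par (-a)) (C (Suc n) (-a) d w)))
     - smul (sgn4 a b c d) (if - a = d then C (Suc (Suc n)) c (- b) w else 0)"
proof -
  let ?C = "C (Suc n)" and ?s = "sgn4 a b c d"
  have uminus_ab: "- a \<in> idx N" "- b \<in> idx N" "a \<noteq> 0" "b \<noteq> 0"
    using assms idx_uminus idx_nonzero by auto
  have summand: "smul (sgn4 a b c k) (rho c k (smul ((-1)^par k) (bracket_rhs ?C a b k d w))) =
       (if k = b then smul (sgn4 a b c b) (rho c b (smul ((-1)^par b) (?C a d w))) else 0)
     - (if a = d then smul ?s (rho c k (smul ((-1)^par k) (?C k b w))) else 0)
     + (if k = - b then smul (sgn4 a b c (-b)) (rho c (-b) (smul ((-1)^par (-b)) (?C (-a) d w))) else 0)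
     - (if - a = d then smul ?s (rho c k (smul ((-1)^par k) (?C k (-b) w))) else 0)"
    if k: "k \<in> idx N" for k
    unfolding bracket_rhs_def sgn4_mult[of a b c k d, symmetric] using assms uminus_ab k
    by (simp add: rho_scale rho_add rho_diff rho_zero vs.scale_right_distrib
        vs.scale_right_diff_distrib mult_ac)
  have "smul (sgn4 a b c b) (rho c b (smul ((-1)^par b) (?C a d w))) =
        smul (sgn4 a b c a) (rho c b (smul ((-1)^par a) (?C a d w)))"
    using assms by (simp add: rho_scale sgn4_mult_sign_right)
  moreover have
    "smul (sgn4 a b c (-b)) (rho c (-b) (smul ((-1)^par (-b)) (?C (-a) d w))) =
     smul (sgn4 a b c (-a)) (rho c (-b) (smul ((-1)^par (-a)) (?C (-a) d w)))"
    using assms uminus_ab by (simp add: rho_scale sgn4_mult_sign_right_uminus)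
  ultimately show ?thesis
    using assms uminus_ab finite_idx
    by (simp add: summand sum.distrib sum_subtractf vs.scale_sum_right)
qed

lemma Cop_supercommutator:
  assumes "a \<in> idx N" "b \<in> idx N" "c \<in> idx N" "d \<in> idx N"
  shows "rho a b (C (Suc n) c d w) =
         smul (sgn4 a b c d) (C (Suc n) c d (rho a b w)) + bracket_rhs (C (Suc n)) a b c d w"
  using assms
proof (induction n arbitrary: a b c d w)
  case 0
  then show ?case unfolding Cop.simps(2) by (rule rho_supercommutator)
next
  case (Suc n)
  let ?C = "C (Suc n)" and ?s = "sgn4 a b c d"
  have "rho a b (rho c k (smul ((-1)^par k) (?C k d w))) =
        smul ?s (rho c k (smul ((-1)^par k) (?C k d (rho a b w))))
      + smul (sgn4 a b c k) (rho c k (smul ((-1)^par k) (bracket_rhs ?C a b k d w)))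
      + bracket_rhs rho a b c k (smul ((-1)^par k) (?C k d w))"
    if k: "k \<in> idx N" for k
  proof -
    have "rho a b (smul ((-1)^par k) (?C k d w)) =
          smul ((-1)^par k) (smul (sgn4 a b k d) (?C k d (rho a b w)) + bracket_rhs ?C a b k d w)"
      using Suc k by (simp add: rho_scale)
    then have "rho c k (rho a b (smul ((-1)^par k) (?C k d w))) =
          smul ((-1)^par k * sgn4 a b k d) (rho c k (?C k d (rho a b w)))
        + rho c k (smul ((-1)^par k) (bracket_rhs ?C a b k d w))"
      using Suc.prems k by (simp add: rho_scale rho_add vs.scale_right_distrib)
    moreover have "sgn4 a b c k * ((-1)^par k * sgn4 a b k d) = ?s * (-1)^par k"
      using sgn4_mult[of a b c k d] by (simp add: mult_ac)
    ultimately show ?thesis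
      using Suc.prems k rho_supercommutator[of a b c k "smul ((-1)^par k) (?C k d w)"]
      by (simp add: rho_scale vs.scale_right_distrib)
  qed
  then have "rho a b (C (Suc (Suc n)) c d w) =
      smul ?s (C (Suc (Suc n)) c d (rho a b w))
    + (\<Sum>k\<in>idx N. smul (sgn4 a b c k) (rho c k (smul ((-1)^par k) (bracket_rhs ?C a b k d w))))
    + (\<Sum>k\<in>idx N. bracket_rhs rho a b c k (smul ((-1)^par k) (?C k d w)))"
    using Suc.prems by (simp add: rho_sum sum.distrib vs.scale_sum_right)
  then show ?case
    using Suc.prems
    unfolding sum_rho_bracket_rhs_Cop[OF Suc.prems] sum_bracket_rhs_rho[OF Suc.prems(1-3)]
    by (simp add: bracket_rhs_def smul_if_zero algebra_simps del: Cop.simps)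
qed

lemma Cop_annihilates_highest_weight_vector:
  assumes highest: "\<forall>i\<in>idx N. \<forall>j\<in>idx N. \<bar>i\<bar> < \<bar>j\<bar> \<longrightarrow> rho i j v = 0"
    and "i \<in> idx N" "j \<in> idx N" "\<bar>i\<bar> < \<bar>j\<bar>"
  shows "C (Suc n) i j v = 0"
  using assms(2-)
proof (induction n arbitrary: i j)
  case 0
  then show ?case using highest by simp
next
  case (Suc n)
  have "rho i k (smul ((-1)^par k) (C (Suc n) k j v)) = 0" if k: "k \<in> idx N" for k
  proof (cases "\<bar>k\<bar> < \<bar>j\<bar>")
    case True
    then show ?thesis using Suc k by (simp add: rho_zero)
  next
    case False
    then have "rho i k v = 0" using highest Suc.prems k by auto
    moreover have "C (Suc n) i j v = 0" using Suc by blast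
    moreover have "k \<noteq> - k" "i \<noteq> j" "- i \<noteq> j"
      using idx_nonzero[OF k] Suc.prems(3) by auto
    ultimately show ?thesis
      using Suc.prems k Cop_supercommutator[of i k k j n v]
      by (simp add: bracket_rhs_def rho_scale Cop_zero)
  qed
  then show ?case by simp
qed

end

theorem mainTheorem4:
  fixes smul :: "complex \<Rightarrow> 'v::ab_group_add \<Rightarrow> 'v"
    and N :: nat and rho :: "int \<Rightarrow> int \<Rightarrow> 'v \<Rightarrow> 'v"
    and v :: 'v and lam :: "int \<Rightarrow> complex"
  assumes "N \<ge> 1"
    and "q_rep smul N rho"
    and "\<forall>i\<in>idx N. \<forall>j\<in>idx N. \<bar>i\<bar> < \<bar>j\<bar> \<longrightarrow> rho i j v = 0"
    and "\<forall>i\<in>{1..int N}. rho i i v = smul (lam i) v"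
  shows "\<forall>n\<ge>1. \<forall>i\<in>idx N. \<forall>j\<in>idx N. \<bar>i\<bar> < \<bar>j\<bar> \<longrightarrow> Cop smul N rho n i j v = 0"
proof (intro allI impI ballI)
  interpret q_representation smul N rho by (rule q_representation.intro) fact
  fix n :: nat and i j
  assume "n \<ge> 1" "i \<in> idx N" "j \<in> idx N" "\<bar>i\<bar> < \<bar>j\<bar>"
  moreover obtain m where "n = Suc m" using \<open>n \<ge> 1\<close> by (cases n) auto
  ultimately show "Cop smul N rho n i j v = 0"
    using Cop_annihilates_highest_weight_vector[OF assms(3)] by simp
qed

end
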